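(* In the setting of the context (with $\rho<1$ and $\mu_l\le\mu_h$): (i) if $F(y_0)\neq0$, then $1<1/\eta_1<y_0$; (ii) $T'(1)<0$.
   Context: Fix $p,q,\mu_h,\mu_l\in(0,1)$ with $p+q+\mu_h+\mu_l=1$ and $\mu_l\le\mu_h$. For real $x$ write $\bar x=1-x$; let $\rho_h=p/\mu_h$, $\rho_l=q/\mu_l$, $\rho=\rho_h+\rho_l$, and assume $\rho<1$. Let $\Delta(y)=(p\mu_h-\bar p\bar\mu_h)^2(qy+\bar q)^2-2(p\mu_h+\bar p\bar\mu_h)(qy+\bar q)+1$, with zeros $y_0<y_1$ given by $y_{0,1}=\frac{p\mu_h+\bar p\bar\mu_h\mp2\sqrt{p\mu_h\bar p\bar\mu_h}}{(p\mu_h-\bar p\bar\mu_h)^2q}-\frac{\bar q}{q}$; $\sqrt{\Delta(y)}$ denotes the branch analytic on $\mathbb{C}\setminus[y_0,y_1]$ that is positive for real $y<y_0$. Let $F(y)=(\bar p+\mu_h-2\bar p\mu_l)qy^2+[(\bar p+\mu_h-2\bar p\mu_l)\bar q+2\bar pq\mu_l-1]y+2\bar p\bar q\mu_l$ and $T(y)=F(y)-y\sqrt{\Delta(y)}$. Let $\eta_1=\frac{(1-\mu_h\bar q-\bar p\bar q\bar\mu_l-\bar pq\mu_l)+\sqrt{(1-\mu_h\bar q-\bar p\bar q\bar\mu_l-\bar pq\mu_l)^2+4\bar p\bar q(\mu_h-\bar p\mu_l)\bar\mu_lq}}{2\bar p\bar q\mu_l}$. *)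

theory Defs
  imports Complex_Main
begin

definition Delta :: "real \<Rightarrow> real \<Rightarrow> real \<Rightarrow> real \<Rightarrow> real \<Rightarrow> real" where
  "Delta p q mh ml y =
     (p*mh - (1-p)*(1-mh))^2 * (q*y + (1-q))^2 - 2*(p*mh + (1-p)*(1-mh))*(q*y + (1-q)) + 1"

definition y0 :: "real \<Rightarrow> real \<Rightarrow> real \<Rightarrow> real \<Rightarrow> real" where
  "y0 p q mh ml =
     (p*mh + (1-p)*(1-mh) - 2*sqrt (p*mh*(1-p)*(1-mh))) / ((p*mh - (1-p)*(1-mh))^2 * q)
     - (1-q)/q"

definition y1 :: "real \<Rightarrow> real \<Rightarrow> real \<Rightarrow> real \<Rightarrow> real" where
  "y1 p q mh ml =
     (p*mh + (1-p)*(1-mh) + 2*sqrt (p*mh*(1-p)*(1-mh))) / ((p*mh - (1-p)*(1-mh))^2 * q)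
     - (1-q)/q"

definition Fpoly :: "real \<Rightarrow> real \<Rightarrow> real \<Rightarrow> real \<Rightarrow> real \<Rightarrow> real" where
  "Fpoly p q mh ml y =
     ((1-p) + mh - 2*(1-p)*ml)*q*y^2
     + (((1-p) + mh - 2*(1-p)*ml)*(1-q) + 2*(1-p)*q*ml - 1)*y
     + 2*(1-p)*(1-q)*ml"

text \<open>T(y) = F(y) - y sqrt(Delta(y)). On real y < y0 the chosen branch of sqrt(Delta)
  is the positive real square root, so T is rendered as a real function there.\<close>
definition Tfun :: "real \<Rightarrow> real \<Rightarrow> real \<Rightarrow> real \<Rightarrow> real \<Rightarrow> real" where
  "Tfun p q mh ml y = Fpoly p q mh ml y - y * sqrt (Delta p q mh ml y)"

definition eta1 :: "real \<Rightarrow> real \<Rightarrow> real \<Rightarrow> real \<Rightarrow> real" where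
  "eta1 p q mh ml =
     (let a = 1 - mh*(1-q) - (1-p)*(1-q)*(1-ml) - (1-p)*q*ml
      in (a + sqrt (a^2 + 4*(1-p)*(1-q)*(mh - (1-p)*ml)*(1-ml)*q)) / (2*(1-p)*(1-q)*ml))"

end

theory Submission
  imports Defs
begin

text \<open>
  Part (ii): \<open>\<Delta>(1) = (\<mu>\<^sub>h - p)\<^sup>2\<close>, and a direct computation gives
  \<open>(\<mu>\<^sub>h - p) T'(1) = -2 (1 - p) (\<mu>\<^sub>h \<mu>\<^sub>l - p \<mu>\<^sub>l - q \<mu>\<^sub>h)\<close>, which is negative
  precisely because \<open>\<rho> < 1\<close>.

  Part (i): \<open>F(y)\<^sup>2 - y\<^sup>2 \<Delta>(y)\<close> factors as \<open>4 (1 - p) (y - 1) (q y + 1 - q) G(y)\<close> for a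
  quadratic \<open>G\<close> whose leading coefficient is positive (this is where \<open>\<mu>\<^sub>l \<le> \<mu>\<^sub>h\<close> enters)
  and whose constant term is negative; its positive root is \<open>1/\<eta>\<^sub>1\<close>. Since \<open>G(1) < 0\<close>
  is again \<open>\<rho> < 1\<close>, we get \<open>1 < 1/\<eta>\<^sub>1\<close>. Writing \<open>s = q y + 1 - q\<close>, the root \<open>y\<^sub>0\<close>
  corresponds to \<open>s = 1/(\<surd>(p\<mu>\<^sub>h) + \<surd>((1-p)(1-\<mu>\<^sub>h)))\<^sup>2\<close>, and AM-GM (strict as
  \<open>p \<noteq> \<mu>\<^sub>h\<close>) gives \<open>y\<^sub>0 > 1\<close>. As \<open>\<Delta>(y\<^sub>0) = 0\<close>, the factorisation turns
  \<open>F(y\<^sub>0) \<noteq> 0\<close> into \<open>G(y\<^sub>0) > 0\<close>, i.e. \<open>1/\<eta>\<^sub>1 < y\<^sub>0\<close>.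
\<close>

lemma sqrt_mult_less_mean:
  fixes x y :: real
  assumes "0 \<le> x" "0 \<le> y" "x \<noteq> y"
  shows "sqrt (x*y) < (x + y) / 2"
proof -
  have "sqrt x \<noteq> sqrt y" using assms by simp
  then have "0 < (sqrt x - sqrt y)^2" by simp
  also have "\<dots> = x + y - 2 * sqrt (x*y)"
    using assms by (simp add: power2_diff real_sqrt_mult)
  finally show ?thesis by simp
qed

lemma quadratic_pos_root:
  fixes c b e :: real
  assumes "0 < c" "e < 0"
  defines "z \<equiv> -2*e / (b + sqrt (b^2 - 4*c*e))"
  shows "c*z^2 + b*z + e = 0" "0 < z"
proof -
  define s where "s = sqrt (b^2 - 4*c*e)"
  have ce: "c*e < 0" using assms by (simp add: mult_pos_neg)
  have "0 \<le> b^2 - 4*c*e" using ce zero_le_power2[of b] by linarith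
  then have s2: "s^2 = b^2 - 4*c*e" unfolding s_def by simp
  have "\<bar>b\<bar> < s"
    unfolding s_def using ce by (intro real_less_rsqrt) simp
  then have bs: "0 < b + s" by linarith
  have zs: "z = -2*e / (b + s)" by (simp add: z_def s_def)
  have zbs: "z * (b + s) = -2*e" unfolding zs using bs by simp
  have "(b + s)^2 * (c*z^2 + b*z + e)
        = c * (z*(b + s))^2 + b * (z*(b + s)) * (b + s) + e * (b + s)^2"
    by (simp add: power2_eq_square algebra_simps)
  also have "\<dots> = e * (4*c*e - b^2 + s^2)"
    unfolding zbs by (simp add: power2_eq_square algebra_simps)
  finally have "(b + s)^2 * (c*z^2 + b*z + e) = e * (4*c*e - b^2 + s^2)" .
  then show "c*z^2 + b*z + e = 0" using s2 bs by simp
  show "0 < z" unfolding zs using assms bs by (simp add: divide_neg_pos)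
qed

lemma quadratic_sign_pos_root:
  fixes c b e z x :: real
  assumes "0 < c" "e < 0" "0 < z" "c*z^2 + b*z + e = 0" "0 < x"
  shows "c*x^2 + b*x + e < 0 \<longleftrightarrow> x < z" "0 < c*x^2 + b*x + e \<longleftrightarrow> z < x"
proof -
  have b: "b = -c*z - e/z" using assms(3,4) by (simp add: field_simps power2_eq_square)
  have factor: "c*x^2 + b*x + e = (x - z) * (c*x - e/z)"
    unfolding b using assms(3) by (simp add: field_simps power2_eq_square)
  have "e/z < 0" using assms by (simp add: divide_neg_pos)
  moreover have "0 < c*x" using assms by simp
  ultimately have "0 < c*x - e/z" by linarith
  then show "c*x^2 + b*x + e < 0 \<longleftrightarrow> x < z" "0 < c*x^2 + b*x + e \<longleftrightarrow> z < x"
    unfolding factor by (simp_all add: mult_less_0_iff zero_less_mult_iff)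
qed

lemma quadratic_root_inverse_sum_sq:
  fixes u v :: real
  assumes "u + v \<noteq> 0"
  shows "(u^2 - v^2)^2 * (1 / (u + v)^2)^2 - 2*(u^2 + v^2) * (1 / (u + v)^2) + 1 = 0"
proof -
  have cancel: "a*t*(1/t)^2 - b*(1/t) + 1 = (a - b + t) / t" if "t \<noteq> 0" for a b t :: real
    using that by (simp add: field_simps power2_eq_square)
  have "(u^2 - v^2)^2 = (u - v)^2 * (u + v)^2" by (simp add: power2_eq_square algebra_simps)
  then have "(u^2 - v^2)^2 * (1 / (u + v)^2)^2 - 2*(u^2 + v^2) * (1 / (u + v)^2) + 1
             = ((u - v)^2 - 2*(u^2 + v^2) + (u + v)^2) / (u + v)^2"
    using cancel[of "(u + v)^2"] assms by simp
  also have "\<dots> = 0" by (simp add: power2_eq_square algebra_simps)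
  finally show ?thesis .
qed

definition Gpoly :: "real \<Rightarrow> real \<Rightarrow> real \<Rightarrow> real \<Rightarrow> real \<Rightarrow> real" where
  "Gpoly p q mh ml y =
     (mh - (1-p)*ml)*(1-ml)*q*y^2
     + ml*(1 - mh*(1-q) - (1-p)*(1-q)*(1-ml) - (1-p)*q*ml)*y
     - (1-p)*(1-q)*ml^2"

lemma Fpoly_sq_minus_Delta:
  assumes "p + q + mh + ml = 1"
  shows "(Fpoly p q mh ml y)^2 - y^2 * Delta p q mh ml y
           = 4*(1-p)*(y-1)*(q*y + 1 - q) * Gpoly p q mh ml y"
proof -
  have ml: "ml = 1 - p - q - mh" using assms by simp
  show ?thesis unfolding Fpoly_def Delta_def Gpoly_def ml by algebra
qed

lemma Gpoly_at_1:
  assumes "p + q + mh + ml = 1"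
  shows "Gpoly p q mh ml 1 = p*ml + q*mh - mh*ml"
proof -
  have "ml = 1 - p - q - mh" using assms by simp
  then show ?thesis unfolding Gpoly_def by (simp add: algebra_simps power2_eq_square)
qed

lemma Gpoly_sign:
  fixes p q mh ml y :: real
  assumes "0 < p" "p < 1" "0 < q" "q < 1" "0 < ml" "ml < 1" "ml \<le> mh" "0 < y"
  shows "Gpoly p q mh ml y < 0 \<longleftrightarrow> y < 1 / eta1 p q mh ml"
    and "0 < Gpoly p q mh ml y \<longleftrightarrow> 1 / eta1 p q mh ml < y"
proof -
  define A where "A = 1 - mh*(1-q) - (1-p)*(1-q)*(1-ml) - (1-p)*q*ml"
  define c where "c = (mh - (1-p)*ml)*(1-ml)*q"
  define e where "e = - ((1-p)*(1-q)*ml^2)"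
  define S where "S = sqrt (A^2 + 4*(1-p)*(1-q)*(mh - (1-p)*ml)*(1-ml)*q)"
  have G: "Gpoly p q mh ml y = c*y^2 + (ml*A)*y + e"
    by (simp add: Gpoly_def A_def c_def e_def algebra_simps)
  have "(1-p)*ml < mh" using assms by (smt (verit) mult_less_cancel_right2)
  then have c: "0 < c" using assms by (simp add: c_def)
  have e: "e < 0" using assms by (simp add: e_def)
  have "(ml*A)^2 - 4*c*e = ml^2 * (A^2 + 4*(1-p)*(1-q)*(mh - (1-p)*ml)*(1-ml)*q)"
    by (simp add: c_def e_def power2_eq_square algebra_simps)
  then have sqrt_eq: "sqrt ((ml*A)^2 - 4*c*e) = ml * S"
    using assms by (simp add: S_def real_sqrt_mult)
  have "1 / eta1 p q mh ml = 2*((1-p)*(1-q)*ml) / (A + S)"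
    by (simp only: eta1_def Let_def A_def S_def mult.assoc) simp
  also have "\<dots> = (ml * (2*((1-p)*(1-q)*ml))) / (ml * (A + S))"
    using assms by simp
  also have "\<dots> = -2*e / (ml*A + sqrt ((ml*A)^2 - 4*c*e))"
    unfolding sqrt_eq by (simp add: e_def power2_eq_square distrib_left)
  finally have root: "1 / eta1 p q mh ml = -2*e / (ml*A + sqrt ((ml*A)^2 - 4*c*e))" .
  show "Gpoly p q mh ml y < 0 \<longleftrightarrow> y < 1 / eta1 p q mh ml"
    and "0 < Gpoly p q mh ml y \<longleftrightarrow> 1 / eta1 p q mh ml < y"
    unfolding G root using quadratic_sign_pos_root[OF c e quadratic_pos_root(2,1)[OF c e] \<open>0 < y\<close>]
    by simp_all
qed

lemma y0_shift:
  fixes p q mh ml :: real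
  assumes "0 < p" "p < 1" "0 < mh" "mh < 1" "q \<noteq> 0" "p + mh \<noteq> 1"
  shows "q * y0 p q mh ml + (1-q) = 1 / (sqrt (p*mh) + sqrt ((1-p)*(1-mh)))^2"
proof -
  define u where "u = sqrt (p*mh)"
  define v where "v = sqrt ((1-p)*(1-mh))"
  have u2: "u^2 = p*mh" and v2: "v^2 = (1-p)*(1-mh)" and u: "0 \<le> u" and v: "0 \<le> v"
    using assms by (simp_all add: u_def v_def)
  have uv: "sqrt (p*mh*(1-p)*(1-mh)) = u*v"
    by (simp add: u_def v_def flip: real_sqrt_mult mult.assoc)
  have "u^2 \<noteq> v^2" unfolding u2 v2 using assms by (auto simp: algebra_simps)
  then have "u - v \<noteq> 0" "u + v \<noteq> 0" using u v by auto
  have "q * y0 p q mh ml + (1-q) = (u^2 + v^2 - 2*(u*v)) / (u^2 - v^2)^2"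
    unfolding y0_def uv using assms by (simp add: u2 v2 field_simps)
  also have "\<dots> = (u - v)^2 / ((u - v)^2 * (u + v)^2)"
    by (simp add: power2_eq_square algebra_simps)
  also have "\<dots> = 1 / (u + v)^2"
    using \<open>u - v \<noteq> 0\<close> by simp
  finally show ?thesis by (simp add: u_def v_def)
qed

lemma Delta_y0:
  fixes p q mh ml :: real
  assumes "0 < p" "p < 1" "0 < mh" "mh < 1" "q \<noteq> 0" "p + mh \<noteq> 1"
  shows "Delta p q mh ml (y0 p q mh ml) = 0"
proof -
  define u where "u = sqrt (p*mh)"
  define v where "v = sqrt ((1-p)*(1-mh))"
  have u2: "u^2 = p*mh" and v2: "v^2 = (1-p)*(1-mh)"
    using assms by (simp_all add: u_def v_def)
  have "0 < u" "0 \<le> v" using assms by (simp_all add: u_def v_def)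
  have "Delta p q mh ml (y0 p q mh ml)
        = (u^2 - v^2)^2 * (1 / (u + v)^2)^2 - 2*(u^2 + v^2) * (1 / (u + v)^2) + 1"
    unfolding Delta_def y0_shift[OF assms] u2 v2 by (simp add: u_def v_def)
  also have "\<dots> = 0"
    using \<open>0 < u\<close> \<open>0 \<le> v\<close> by (intro quadratic_root_inverse_sum_sq) simp
  finally show ?thesis .
qed

lemma y0_gt_1:
  fixes p q mh ml :: real
  assumes "0 < p" "p < 1" "0 < mh" "mh < 1" "0 < q" "p + mh \<noteq> 1" "p \<noteq> mh"
  shows "1 < y0 p q mh ml"
proof -
  define t where "t = sqrt (p*mh) + sqrt ((1-p)*(1-mh))"
  have "sqrt (p*mh) < (p + mh) / 2"
    using assms by (intro sqrt_mult_less_mean) auto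
  moreover have "sqrt ((1-p)*(1-mh)) \<le> ((1-p) + (1-mh)) / 2"
    using assms by (intro arith_geo_mean_sqrt) auto
  ultimately have "t < 1" by (simp add: t_def)
  moreover have "0 < t" using assms by (simp add: t_def add_pos_nonneg)
  ultimately have "1 < 1 / t^2" by (simp add: power_less_one_iff)
  then have "q * 1 < q * y0 p q mh ml"
    using y0_shift[of p mh q ml] assms unfolding t_def by linarith
  then show ?thesis using assms by simp
qed

lemma Fpoly_has_derivative:
  "(Fpoly p q mh ml has_real_derivative
      2*((1-p) + mh - 2*(1-p)*ml)*q*y + (((1-p) + mh - 2*(1-p)*ml)*(1-q) + 2*(1-p)*q*ml - 1))
     (at y)"
  unfolding Fpoly_def[abs_def] by (auto intro!: derivative_eq_intros simp: algebra_simps)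

lemma Delta_has_derivative:
  "(Delta p q mh ml has_real_derivative
      2*q*((p*mh - (1-p)*(1-mh))^2*(q*y + (1-q)) - (p*mh + (1-p)*(1-mh)))) (at y)"
  unfolding Delta_def[abs_def] by (auto intro!: derivative_eq_intros simp: algebra_simps)

lemma Tfun_has_derivative:
  assumes "(Fpoly p q mh ml has_real_derivative F') (at y)"
    and "(Delta p q mh ml has_real_derivative D') (at y)"
    and "0 < Delta p q mh ml y"
  shows "(Tfun p q mh ml has_real_derivative
           F' - (sqrt (Delta p q mh ml y) + y * D' / (2 * sqrt (Delta p q mh ml y)))) (at y)"
  unfolding Tfun_def[abs_def]
  using assms by (auto intro!: derivative_eq_intros simp: field_simps)

lemma Tfun_deriv_at_1:
  fixes p q mh ml :: real
  assumes "p + q + mh + ml = 1" "p < mh"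
  shows "(Tfun p q mh ml has_real_derivative -2*(1-p)*(mh*ml - p*ml - q*mh) / (mh - p)) (at 1)"
proof -
  have "Delta p q mh ml 1 = (mh - p)^2"
    by (simp add: Delta_def power2_eq_square algebra_simps)
  then have Delta_pos: "0 < Delta p q mh ml 1" and sqrt_Delta: "sqrt (Delta p q mh ml 1) = mh - p"
    using assms by simp_all
  have ml: "ml = 1 - p - q - mh" using assms by simp
  have "2*((1-p) + mh - 2*(1-p)*ml)*q*1 + (((1-p) + mh - 2*(1-p)*ml)*(1-q) + 2*(1-p)*q*ml - 1)
        - ((mh - p) + 1 * (2*q*((p*mh - (1-p)*(1-mh))^2*(q*1 + (1-q)) - (p*mh + (1-p)*(1-mh))))
             / (2 * (mh - p)))
        = -2*(1-p)*(mh*ml - p*ml - q*mh) / (mh - p)"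
    (is "?D = _")
    using assms unfolding ml by (simp add: field_simps power2_eq_square)
  moreover have "(Tfun p q mh ml has_real_derivative ?D) (at 1)"
    using Tfun_has_derivative[OF Fpoly_has_derivative Delta_has_derivative Delta_pos]
    unfolding sqrt_Delta .
  ultimately show ?thesis by simp
qed

lemma Gpoly_y0_pos:
  fixes p q mh ml :: real
  assumes "0 < p" "p < 1" "0 < q" "q < 1" "0 < mh" "mh < 1" "0 < ml"
    and "p + q + mh + ml = 1" "p \<noteq> mh"
    and "Fpoly p q mh ml (y0 p q mh ml) \<noteq> 0"
  shows "0 < Gpoly p q mh ml (y0 p q mh ml)"
proof -
  define Y where "Y = y0 p q mh ml"
  have "p + mh \<noteq> 1" using assms by linarith
  then have "1 < Y" and Delta_Y: "Delta p q mh ml Y = 0"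
    using assms y0_gt_1 Delta_y0 by (simp_all add: Y_def)
  have "q*1 < q*Y" using \<open>1 < Y\<close> assms by simp
  then have "0 < q*Y + 1 - q" by linarith
  moreover have "0 < 4*(1-p)" "0 < Y - 1" using \<open>1 < Y\<close> assms by simp_all
  ultimately have factor_pos: "0 < 4*(1-p)*(Y-1)*(q*Y + 1 - q)"
    by (metis mult_pos_pos)
  have "0 < (Fpoly p q mh ml Y)^2" using assms by (simp add: Y_def)
  also have "\<dots> = 4*(1-p)*(Y-1)*(q*Y + 1 - q) * Gpoly p q mh ml Y"
    using Fpoly_sq_minus_Delta[OF assms(8), of Y] Delta_Y by simp
  finally show ?thesis using zero_less_mult_pos factor_pos unfolding Y_def by blast
qed

theorem lemma4p1:
  fixes p q mh ml :: real
  assumes "0 < p" "p < 1" "0 < q" "q < 1" "0 < mh" "mh < 1" "0 < ml" "ml < 1"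
    and "p + q + mh + ml = 1"
    and "ml \<le> mh"
    and "p/mh + q/ml < 1"
  shows "(Fpoly p q mh ml (y0 p q mh ml) \<noteq> 0 \<longrightarrow>
            1 < 1 / eta1 p q mh ml \<and> 1 / eta1 p q mh ml < y0 p q mh ml)
         \<and> (\<exists>D. (Tfun p q mh ml has_real_derivative D) (at 1) \<and> D < 0)"
proof -
  have "(p/mh + q/ml) * (mh*ml) = p*ml + q*mh"
    using assms by (simp add: field_simps)
  then have stable: "p*ml + q*mh < mh*ml"
    using mult_strict_right_mono[OF assms(11), of "mh*ml"] assms by simp
  have "p/mh < 1" using assms(3,7,11) divide_pos_pos[of q ml] by linarith
  then have "p < mh" using assms by simp
  have "1 < 1 / eta1 p q mh ml"
    using Gpoly_sign(1)[of p q ml mh 1] Gpoly_at_1[OF assms(9)] stable assms by simp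
  moreover have "1 / eta1 p q mh ml < y0 p q mh ml"
    if "Fpoly p q mh ml (y0 p q mh ml) \<noteq> 0"
  proof -
    have "0 < Gpoly p q mh ml (y0 p q mh ml)"
      using Gpoly_y0_pos[of p q mh ml] that \<open>p < mh\<close> assms by simp
    then show ?thesis
      using Gpoly_sign(2)[of p q ml mh "y0 p q mh ml"] y0_gt_1[of p mh q ml] \<open>p < mh\<close> assms
      by simp
  qed
  moreover have "-2*(1-p)*(mh*ml - p*ml - q*mh) / (mh - p) < 0"
    using stable \<open>p < mh\<close> assms by (intro divide_neg_pos mult_neg_pos) auto
  ultimately show ?thesis
    using Tfun_deriv_at_1[OF assms(9) \<open>p < mh\<close>] by blast
qed

end
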